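(* Let $C, C'\in\mathbb{C}_2$. Then $\mathcal{T}(C\min C') = \mathcal{T}(C)\sqcap\mathcal{T}(C')$.
   Context: Channels: fix two inputs $D_0, D_1$. A two-row channel $C$ with output set $\mathcal{Y}$ is a pair of probability distributions $C_{D_0}, C_{D_1}$ on $\mathcal{Y}$ (its rows); in the discrete case it is a $2\times|\mathcal{Y}|$ matrix with nonnegative entries whose rows sum to $1$; in general the rows may be probability measures on a common measurable output space. $\mathbb{C}_2$ is the set of all two-row channels. A channel $W$ is a row-stochastic matrix (Markov kernel), and $C\cdot W$ denotes composition. Refinement: $C \sqsubseteq C'$ iff there is a channel $W$ with $C\cdot W = C'$; $C\min C'$ denotes the greatest lower bound of $C, C'$ in $(\mathbb{C}_2,\sqsubseteq)$ (it exists, unique up to mutual refinement). Trade-off functions: for distributions $p,q$ on $\mathcal{Y}$, a test is a (measurable) map $\phi:\mathcal{Y}\to[0,1]$, with $\alpha_\phi=\mathbb{E}_p[\phi]$ and $\beta_\phi = 1-\mathbb{E}_q[\phi]$; $\mathbf{T}(p,q)(\alpha)=\inf\{\beta_\phi : \alpha_\phi\le\alpha\}$. For $C\in\mathbb{C}_2$, $\mathcal{T}(C) := \mathbf{T}(C_{D_0},C_{D_1})$. $\mathbb{F}$ is the set of convex functions $f:[0,1]\to[0,1]$ with $f(\alpha)\le1-\alpha$ for all $\alpha$, ordered pointwise. For $f,g\in\mathbb{F}$, $f\sqcap g$ is the pointwise supremum of all $g'\in\mathbb{F}$ with $g'\le f$ and $g'\le g$. *)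

theory Defs
  imports "HOL-Probability.Probability"
begin

text \<open>A two-row channel: a pair of probability measures (rows C_D0, C_D1) on a
common measurable output space.\<close>
type_synonym 'y channel = "'y measure \<times> 'y measure"

definition is_channel :: "'y channel \<Rightarrow> bool" where
  "is_channel C \<longleftrightarrow> prob_space (fst C) \<and> prob_space (snd C) \<and> sets (fst C) = sets (snd C)"

definition refines :: "'a channel \<Rightarrow> 'b channel \<Rightarrow> bool" where
  "refines C C' \<longleftrightarrow> (\<exists>W. W \<in> measurable (fst C) (subprob_algebra (fst C')) \<and>
      (\<forall>y\<in>space (fst C). prob_space (W y)) \<and>
      fst C \<bind> W = fst C' \<and> snd C \<bind> W = snd C')"

text \<open>Competing lower
bounds range over channels with real outputs; every two-row channel is equivalent (mutual
refinement) to one with real outputs, via the likelihood-ratio statistic.\<close>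
definition is_channel_glb :: "'d channel \<Rightarrow> 'a channel \<Rightarrow> 'b channel \<Rightarrow> bool" where
  "is_channel_glb D C C' \<longleftrightarrow> is_channel D \<and> refines D C \<and> refines D C' \<and>
     (\<forall>E :: real channel. is_channel E \<and> refines E C \<and> refines E C' \<longrightarrow> refines E D)"

definition tradeoff :: "'y measure \<Rightarrow> 'y measure \<Rightarrow> real \<Rightarrow> real" where
  "tradeoff p q \<alpha> = Inf {1 - (\<integral>y. \<phi> y \<partial>q) | \<phi>.
      \<phi> \<in> borel_measurable p \<and> (\<forall>y\<in>space p. 0 \<le> \<phi> y \<and> \<phi> y \<le> 1) \<and> (\<integral>y. \<phi> y \<partial>p) \<le> \<alpha>}"

definition tradeoff_ch :: "'y channel \<Rightarrow> real \<Rightarrow> real" where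
  "tradeoff_ch C = tradeoff (fst C) (snd C)"

definition in_F :: "(real \<Rightarrow> real) \<Rightarrow> bool" where
  "in_F f \<longleftrightarrow> convex_on {0..1} f \<and> (\<forall>\<alpha>\<in>{0..1}. 0 \<le> f \<alpha> \<and> f \<alpha> \<le> 1 \<and> f \<alpha> \<le> 1 - \<alpha>)"

definition F_meet :: "(real \<Rightarrow> real) \<Rightarrow> (real \<Rightarrow> real) \<Rightarrow> real \<Rightarrow> real" where
  "F_meet f g \<alpha> = Sup {h \<alpha> | h. in_F h \<and> (\<forall>x\<in>{0..1}. h x \<le> f x \<and> h x \<le> g x)}"

end

theory Submission
  imports Defs
begin

text \<open>
  The trade-off function of \<open>C min C'\<close> lies in \<open>F\<close> and, by data processing, below
  \<open>T(C)\<close> and \<open>T(C')\<close>, hence below their meet. Conversely, let \<open>h \<in> F\<close> lie below both.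
  Up to \<open>\<epsilon>\<close>, \<open>h\<close> is supported at every \<open>\<alpha>\<close> by a line \<open>c - s \<alpha>\<close> that lies below
  \<open>T(C)\<close> and \<open>T(C')\<close>; at \<open>\<alpha> = 0\<close>, where \<open>h\<close> may jump, such a line is obtained from the
  right-continuity of trade-off functions at \<open>0\<close> instead. By the Neyman-Pearson lemma,
  \<open>T(C) \<ge> c - s \<alpha>\<close> says that the rows \<open>p, q\<close> of \<open>C\<close> overlap in the sense
  \<open>\<integral> min q (s p) \<ge> c\<close>, and this overlap allows one to write \<open>C\<close> as a garbling of the
  three-output line channel \<open>E(c,s)\<close> whose trade-off function is \<open>max (c - s \<alpha>) 0\<close>. Thus
  \<open>E(c,s)\<close> is a lower bound of \<open>C\<close> and \<open>C'\<close>, so it refines \<open>C min C'\<close>, and data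
  processing gives \<open>T(C min C') \<ge> c - s \<alpha>\<close>.
\<close>

section \<open>Tests and trade-off functions\<close>

definition is_test :: "'y measure \<Rightarrow> ('y \<Rightarrow> real) \<Rightarrow> bool" where
  "is_test M \<phi> \<longleftrightarrow> \<phi> \<in> borel_measurable M \<and> (\<forall>y\<in>space M. 0 \<le> \<phi> y \<and> \<phi> y \<le> 1)"

lemma is_test_cong_sets:
  assumes "sets M = sets N"
  shows "is_test M \<phi> \<longleftrightarrow> is_test N \<phi>"
proof -
  have "\<phi> \<in> borel_measurable M \<longleftrightarrow> \<phi> \<in> borel_measurable N"
    using assms by (metis measurable_cong_sets)
  moreover have "space M = space N" by (rule sets_eq_imp_space_eq[OF assms])
  ultimately show ?thesis unfolding is_test_def by (simp only:)
qed

lemma is_test_indicator: "A \<in> sets M \<Longrightarrow> is_test M (indicator A)"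
  unfolding is_test_def by (simp add: indicator_def)

lemma is_test_convex_combination:
  assumes "is_test M \<phi>" "is_test M \<psi>" "0 \<le> t" "t \<le> 1"
  shows "is_test M (\<lambda>y. (1 - t) * \<phi> y + t * \<psi> y)"
proof -
  have "0 \<le> (1 - t) * \<phi> y + t * \<psi> y \<and> (1 - t) * \<phi> y + t * \<psi> y \<le> 1" if "y \<in> space M" for y
    using assms that unfolding is_test_def by (simp add: convex_bound_le)
  moreover have "(\<lambda>y. (1 - t) * \<phi> y + t * \<psi> y) \<in> borel_measurable M"
    using assms unfolding is_test_def by (intro borel_measurable_add borel_measurable_times) auto
  ultimately show ?thesis unfolding is_test_def by blast
qed

lemma (in prob_space) test_integral_bounds:
  assumes "is_test M \<phi>"
  shows "integrable M \<phi>" "0 \<le> (\<integral>y. \<phi> y \<partial>M)" "(\<integral>y. \<phi> y \<partial>M) \<le> 1"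
proof -
  have \<phi>: "\<phi> \<in> borel_measurable M" "\<And>y. y \<in> space M \<Longrightarrow> 0 \<le> \<phi> y \<and> \<phi> y \<le> 1"
    using assms unfolding is_test_def by auto
  show "integrable M \<phi>"
    by (rule integrable_const_bound[where B=1]) (simp_all add: \<phi> AE_I2)
  then show "0 \<le> (\<integral>y. \<phi> y \<partial>M)" "(\<integral>y. \<phi> y \<partial>M) \<le> 1"
    using \<phi>(2) integral_mono_AE[of M \<phi> "\<lambda>_. 1"] by (auto simp: prob_space intro!: integral_nonneg_AE AE_I2)
qed

lemma is_test_snd_iff:
  "is_channel C \<Longrightarrow> is_test (snd C) \<phi> \<longleftrightarrow> is_test (fst C) \<phi>"
  unfolding is_channel_def using is_test_cong_sets[of "snd C" "fst C"] by simp

lemma channel_test_integral_bounds: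
  assumes "is_channel C" "is_test (fst C) \<phi>"
  shows "0 \<le> (\<integral>y. \<phi> y \<partial>fst C)" "(\<integral>y. \<phi> y \<partial>fst C) \<le> 1"
    "0 \<le> (\<integral>y. \<phi> y \<partial>snd C)" "(\<integral>y. \<phi> y \<partial>snd C) \<le> 1"
  using assms prob_space.test_integral_bounds[of "fst C" \<phi>] prob_space.test_integral_bounds[of "snd C" \<phi>]
  by (auto simp: is_channel_def is_test_snd_iff)

lemma tradeoff_ch_eq_Inf:
  "tradeoff_ch C \<alpha> =
    Inf {1 - (\<integral>y. \<phi> y \<partial>snd C) | \<phi>. is_test (fst C) \<phi> \<and> (\<integral>y. \<phi> y \<partial>fst C) \<le> \<alpha>}"
  unfolding tradeoff_ch_def tradeoff_def is_test_def by (simp only: conj_assoc)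

lemma tradeoff_ch_le:
  assumes "is_channel C" "is_test (fst C) \<phi>" "(\<integral>y. \<phi> y \<partial>fst C) \<le> \<alpha>"
  shows "tradeoff_ch C \<alpha> \<le> 1 - (\<integral>y. \<phi> y \<partial>snd C)"
  unfolding tradeoff_ch_eq_Inf
proof (rule cInf_lower)
  show "bdd_below {1 - (\<integral>y. \<phi> y \<partial>snd C) | \<phi>. is_test (fst C) \<phi> \<and> (\<integral>y. \<phi> y \<partial>fst C) \<le> \<alpha>}"
  proof (rule bdd_belowI)
    fix x assume "x \<in> {1 - (\<integral>y. \<phi> y \<partial>snd C) | \<phi>. is_test (fst C) \<phi> \<and> (\<integral>y. \<phi> y \<partial>fst C) \<le> \<alpha>}"
    then obtain \<psi> where "is_test (fst C) \<psi>" "x = 1 - (\<integral>y. \<psi> y \<partial>snd C)" by blast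
    then show "0 \<le> x" using channel_test_integral_bounds(4)[OF assms(1)] by simp
  qed
qed (use assms(2,3) in blast)

lemma tradeoff_ch_approx:
  assumes "0 \<le> \<alpha>" "0 < e"
  obtains \<phi> where "is_test (fst C) \<phi>" "(\<integral>y. \<phi> y \<partial>fst C) \<le> \<alpha>"
    "1 - (\<integral>y. \<phi> y \<partial>snd C) < tradeoff_ch C \<alpha> + e"
proof -
  let ?S = "{1 - (\<integral>y. \<phi> y \<partial>snd C) | \<phi>. is_test (fst C) \<phi> \<and> (\<integral>y. \<phi> y \<partial>fst C) \<le> \<alpha>}"
  have "is_test (fst C) (\<lambda>_. 0)" unfolding is_test_def by simp
  then have "1 - (\<integral>y. 0 \<partial>snd C) \<in> ?S" using assms(1) by force
  then have ne: "?S \<noteq> {}" by blast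
  have "Inf ?S < tradeoff_ch C \<alpha> + e" using assms(2) unfolding tradeoff_ch_eq_Inf by simp
  then obtain x where "x \<in> ?S" "x < tradeoff_ch C \<alpha> + e" using cInf_lessD[OF ne] by blast
  with that show thesis by blast
qed

lemma tradeoff_ch_ge:
  assumes "0 \<le> \<alpha>"
    and "\<And>\<phi>. is_test (fst C) \<phi> \<Longrightarrow> (\<integral>y. \<phi> y \<partial>fst C) \<le> \<alpha> \<Longrightarrow> b \<le> 1 - (\<integral>y. \<phi> y \<partial>snd C)"
  shows "b \<le> tradeoff_ch C \<alpha>"
proof (rule field_le_epsilon)
  fix e :: real assume "0 < e"
  then obtain \<phi> where "is_test (fst C) \<phi>" "(\<integral>y. \<phi> y \<partial>fst C) \<le> \<alpha>"
      "1 - (\<integral>y. \<phi> y \<partial>snd C) < tradeoff_ch C \<alpha> + e"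
    using tradeoff_ch_approx[OF assms(1)] by blast
  with assms(2) show "b \<le> tradeoff_ch C \<alpha> + e" by fastforce
qed

lemma tradeoff_ch_nonneg: "is_channel C \<Longrightarrow> 0 \<le> \<alpha> \<Longrightarrow> 0 \<le> tradeoff_ch C \<alpha>"
  by (rule tradeoff_ch_ge) (simp_all add: channel_test_integral_bounds)

lemma tradeoff_ch_le_one_minus:
  assumes "is_channel C" "0 \<le> \<alpha>" "\<alpha> \<le> 1"
  shows "tradeoff_ch C \<alpha> \<le> 1 - \<alpha>"
proof -
  interpret p: prob_space "fst C" using assms(1) unfolding is_channel_def by simp
  interpret q: prob_space "snd C" using assms(1) unfolding is_channel_def by simp
  have "is_test (fst C) (\<lambda>_. \<alpha>)" using assms(2,3) unfolding is_test_def by simp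
  from tradeoff_ch_le[OF assms(1) this] show ?thesis by (simp add: p.prob_space q.prob_space)
qed

lemma tradeoff_ch_convex:
  assumes C: "is_channel C" and "0 \<le> x" "0 \<le> y" and t: "0 \<le> t" "t \<le> 1"
  shows "tradeoff_ch C ((1 - t) * x + t * y) \<le> (1 - t) * tradeoff_ch C x + t * tradeoff_ch C y"
proof (rule field_le_epsilon)
  interpret p: prob_space "fst C" using C unfolding is_channel_def by simp
  interpret q: prob_space "snd C" using C unfolding is_channel_def by simp
  fix e :: real assume "0 < e"
  obtain \<phi> where \<phi>: "is_test (fst C) \<phi>" "(\<integral>y. \<phi> y \<partial>fst C) \<le> x"
      "1 - (\<integral>y. \<phi> y \<partial>snd C) < tradeoff_ch C x + e"
    by (rule tradeoff_ch_approx[of x e C]) (use \<open>0 < e\<close> \<open>0 \<le> x\<close> in auto)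
  obtain \<psi> where \<psi>: "is_test (fst C) \<psi>" "(\<integral>y. \<psi> y \<partial>fst C) \<le> y"
      "1 - (\<integral>y. \<psi> y \<partial>snd C) < tradeoff_ch C y + e"
    by (rule tradeoff_ch_approx[of y e C]) (use \<open>0 < e\<close> \<open>0 \<le> y\<close> in auto)
  define \<theta> where "\<theta> z = (1 - t) * \<phi> z + t * \<psi> z" for z
  have \<theta>: "is_test (fst C) \<theta>"
    unfolding \<theta>_def using is_test_convex_combination[OF \<phi>(1) \<psi>(1) t] .
  have "is_test (snd C) \<phi>" "is_test (snd C) \<psi>"
    using \<phi>(1) \<psi>(1) is_test_snd_iff[OF C] by blast+
  then have "integrable (fst C) \<phi>" "integrable (fst C) \<psi>" "integrable (snd C) \<phi>" "integrable (snd C) \<psi>"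
    using \<phi>(1) \<psi>(1) p.test_integral_bounds(1) q.test_integral_bounds(1) by blast+
  then have int_fst: "(\<integral>z. \<theta> z \<partial>fst C) = (1 - t) * (\<integral>z. \<phi> z \<partial>fst C) + t * (\<integral>z. \<psi> z \<partial>fst C)"
    and int_snd: "(\<integral>z. \<theta> z \<partial>snd C) = (1 - t) * (\<integral>z. \<phi> z \<partial>snd C) + t * (\<integral>z. \<psi> z \<partial>snd C)"
    unfolding \<theta>_def by simp_all
  have "(1 - t) * (\<integral>z. \<phi> z \<partial>fst C) \<le> (1 - t) * x" "t * (\<integral>z. \<psi> z \<partial>fst C) \<le> t * y"
    using \<phi>(2) \<psi>(2) t by (simp_all add: mult_left_mono)
  then have "(\<integral>z. \<theta> z \<partial>fst C) \<le> (1 - t) * x + t * y"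
    unfolding int_fst by linarith
  from tradeoff_ch_le[OF C \<theta> this]
  have "tradeoff_ch C ((1 - t) * x + t * y) \<le> 1 - (\<integral>z. \<theta> z \<partial>snd C)" .
  also have "\<dots> = (1 - t) * (1 - (\<integral>z. \<phi> z \<partial>snd C)) + t * (1 - (\<integral>z. \<psi> z \<partial>snd C))"
    unfolding int_snd by (simp add: algebra_simps)
  also have "\<dots> \<le> (1 - t) * (tradeoff_ch C x + e) + t * (tradeoff_ch C y + e)"
    using \<phi>(3) \<psi>(3) t by (intro add_mono mult_left_mono) simp_all
  also have "\<dots> = (1 - t) * tradeoff_ch C x + t * tradeoff_ch C y + e"
    by (simp add: algebra_simps)
  finally show "tradeoff_ch C ((1 - t) * x + t * y) \<le> (1 - t) * tradeoff_ch C x + t * tradeoff_ch C y + e" .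
qed

lemma tradeoff_ch_in_F:
  assumes "is_channel C"
  shows "in_F (tradeoff_ch C)"
  unfolding in_F_def
proof (intro conjI ballI)
  show "convex_on {0..1} (tradeoff_ch C)"
    by (rule convex_onI) (use tradeoff_ch_convex[OF assms] in simp_all)
  fix \<alpha> :: real assume "\<alpha> \<in> {0..1}"
  then show "0 \<le> tradeoff_ch C \<alpha>" "tradeoff_ch C \<alpha> \<le> 1 - \<alpha>" "tradeoff_ch C \<alpha> \<le> 1"
    using tradeoff_ch_nonneg[OF assms, of \<alpha>] tradeoff_ch_le_one_minus[OF assms, of \<alpha>] by auto
qed

lemma tradeoff_ch_mono_refines:
  assumes X: "is_channel X" and Y: "is_channel Y" and "refines X Y" and "0 \<le> \<alpha>"
  shows "tradeoff_ch X \<alpha> \<le> tradeoff_ch Y \<alpha>"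
proof -
  obtain W where W: "W \<in> measurable (fst X) (subprob_algebra (fst Y))"
      "\<And>y. y \<in> space (fst X) \<Longrightarrow> prob_space (W y)" "fst X \<bind> W = fst Y" "snd X \<bind> W = snd Y"
    using \<open>refines X Y\<close> unfolding refines_def by blast
  have sets_X: "sets (snd X) = sets (fst X)" and "finite_measure (fst X)" "finite_measure (snd X)"
    using X unfolding is_channel_def by (auto simp: prob_space_def)
  have W_snd: "W \<in> measurable (snd X) (subprob_algebra (fst Y))"
    using W(1) measurable_cong_sets[OF sets_X refl, of "subprob_algebra (fst Y)"] by simp
  have W_prob: "AE x in M. emeasure (W x) (space (W x)) \<le> ennreal 1" if "M \<in> {fst X, snd X}" for M
    using W(2) that sets_eq_imp_space_eq[OF sets_X] by (auto intro!: AE_I2 simp: prob_space.emeasure_space_1)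
  have sets_W: "\<And>x. x \<in> space (fst X) \<Longrightarrow> sets (W x) = sets (fst Y)"
    using W(1) by (simp add: measurable_def space_subprob_algebra Pi_iff)
  show ?thesis
  proof (rule tradeoff_ch_ge[OF \<open>0 \<le> \<alpha>\<close>])
    fix \<phi> assume \<phi>: "is_test (fst Y) \<phi>" and "(\<integral>y. \<phi> y \<partial>fst Y) \<le> \<alpha>"
    define \<psi> where "\<psi> x = (\<integral>y. \<phi> y \<partial>W x)" for x
    have \<phi>_meas: "\<phi> \<in> borel_measurable (fst Y)" and \<phi>_bound: "\<And>y. y \<in> space (fst Y) \<Longrightarrow> \<bar>\<phi> y\<bar> \<le> 1"
      using \<phi> unfolding is_test_def by auto
    have "\<psi> \<in> borel_measurable (fst X)"
      unfolding \<psi>_def using measurable_compose[OF W(1) integral_measurable_subprob_algebra[OF \<phi>_meas]]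
      by (simp add: o_def)
    moreover have "0 \<le> \<psi> x \<and> \<psi> x \<le> 1" if "x \<in> space (fst X)" for x
      using prob_space.test_integral_bounds(2,3)[OF W(2)[OF that]] \<phi> is_test_cong_sets[OF sets_W[OF that]]
      unfolding \<psi>_def by simp
    ultimately have \<psi>: "is_test (fst X) \<psi>" unfolding is_test_def by blast
    have "(\<integral>x. \<psi> x \<partial>fst X) = (\<integral>y. \<phi> y \<partial>fst Y)" "(\<integral>x. \<psi> x \<partial>snd X) = (\<integral>y. \<phi> y \<partial>snd Y)"
      unfolding \<psi>_def W(3,4)[symmetric]
      using integral_bind[OF \<phi>_meas \<phi>_bound W(1) \<open>finite_measure (fst X)\<close> W_prob]
        integral_bind[OF \<phi>_meas \<phi>_bound W_snd \<open>finite_measure (snd X)\<close> W_prob]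
      by simp_all
    with tradeoff_ch_le[OF X \<psi>] \<open>(\<integral>y. \<phi> y \<partial>fst Y) \<le> \<alpha>\<close>
    show "tradeoff_ch X \<alpha> \<le> 1 - (\<integral>y. \<phi> y \<partial>snd Y)" by simp
  qed
qed

lemma tradeoff_ch_above_line_iff_tests:
  assumes "is_channel C" "0 \<le> s"
  shows "(\<forall>x\<in>{0..1}. c - s * x \<le> tradeoff_ch C x) \<longleftrightarrow>
    (\<forall>\<phi>. is_test (fst C) \<phi> \<longrightarrow> c \<le> 1 - (\<integral>y. \<phi> y \<partial>snd C) + s * (\<integral>y. \<phi> y \<partial>fst C))"
proof safe
  fix \<phi> assume line: "\<forall>x\<in>{0..1}. c - s * x \<le> tradeoff_ch C x" and \<phi>: "is_test (fst C) \<phi>"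
  have "c - s * (\<integral>y. \<phi> y \<partial>fst C) \<le> tradeoff_ch C (\<integral>y. \<phi> y \<partial>fst C)"
    using line channel_test_integral_bounds(1,2)[OF assms(1) \<phi>] by simp
  also have "\<dots> \<le> 1 - (\<integral>y. \<phi> y \<partial>snd C)"
    using tradeoff_ch_le[OF assms(1) \<phi> order_refl] .
  finally show "c \<le> 1 - (\<integral>y. \<phi> y \<partial>snd C) + s * (\<integral>y. \<phi> y \<partial>fst C)" by simp
next
  fix x :: real
  assume tests: "\<forall>\<phi>. is_test (fst C) \<phi> \<longrightarrow> c \<le> 1 - (\<integral>y. \<phi> y \<partial>snd C) + s * (\<integral>y. \<phi> y \<partial>fst C)"
    and "x \<in> {0..1}"
  show "c - s * x \<le> tradeoff_ch C x"
  proof (rule tradeoff_ch_ge)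
    fix \<phi> assume "is_test (fst C) \<phi>" "(\<integral>y. \<phi> y \<partial>fst C) \<le> x"
    moreover from this(2) have "s * (\<integral>y. \<phi> y \<partial>fst C) \<le> s * x"
      using \<open>0 \<le> s\<close> by (rule mult_left_mono)
    ultimately show "c - s * x \<le> 1 - (\<integral>y. \<phi> y \<partial>snd C)"
      using tests by fastforce
  qed (use \<open>x \<in> {0..1}\<close> in simp)
qed

section \<open>Densities of the two rows\<close>

lemma prob_space_density_iff:
  fixes f :: "'a \<Rightarrow> real"
  assumes f: "f \<in> borel_measurable M" "\<And>x. 0 \<le> f x"
  shows "prob_space (density M (\<lambda>x. ennreal (f x))) \<longleftrightarrow> integrable M f \<and> (\<integral>x. f x \<partial>M) = 1"
proof -
  let ?D = "density M (\<lambda>x. ennreal (f x))"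
  have "emeasure ?D (space ?D) = (\<integral>\<^sup>+x. ennreal (f x) \<partial>M)"
    using f(1) by (auto simp: emeasure_density intro!: nn_integral_cong)
  moreover have "(\<integral>\<^sup>+x. ennreal (f x) \<partial>M) = 1 \<longleftrightarrow> integrable M f \<and> (\<integral>x. f x \<partial>M) = 1"
  proof
    assume *: "(\<integral>\<^sup>+x. ennreal (f x) \<partial>M) = 1"
    then have "integrable M f" using f by (intro integrableI_nonneg) auto
    with * f(2) show "integrable M f \<and> (\<integral>x. f x \<partial>M) = 1"
      by (simp add: nn_integral_eq_integral)
  qed (simp add: nn_integral_eq_integral f(2))
  moreover have "prob_space ?D \<longleftrightarrow> emeasure ?D (space ?D) = 1"
    using prob_space.emeasure_space_1 prob_spaceI by blast
  ultimately show ?thesis by simp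
qed

definition prob_density :: "'a measure \<Rightarrow> ('a \<Rightarrow> real) \<Rightarrow> bool" where
  "prob_density M u \<longleftrightarrow>
    u \<in> borel_measurable M \<and> (\<forall>x. 0 \<le> u x) \<and> integrable M u \<and> (\<integral>x. u x \<partial>M) = 1"

lemma prob_density_prob_space:
  "prob_density M u \<Longrightarrow> prob_space (density M (\<lambda>x. ennreal (u x)))"
  unfolding prob_density_def by (simp add: prob_space_density_iff)

lemma integral_density_test:
  assumes w: "w \<in> borel_measurable M" "\<And>x. 0 \<le> w x" "integrable M w" and "is_test M \<phi>"
  shows "integrable M (\<lambda>x. w x * \<phi> x)"
    "(\<integral>y. \<phi> y \<partial>density M (\<lambda>x. ennreal (w x))) = (\<integral>x. w x * \<phi> x \<partial>M)"
proof -
  have \<phi>: "\<phi> \<in> borel_measurable M" "\<And>x. x \<in> space M \<Longrightarrow> 0 \<le> \<phi> x \<and> \<phi> x \<le> 1"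
    using \<open>is_test M \<phi>\<close> unfolding is_test_def by auto
  show "integrable M (\<lambda>x. w x * \<phi> x)"
  proof (rule Bochner_Integration.integrable_bound[OF w(3)])
    show "AE x in M. norm (w x * \<phi> x) \<le> norm (w x)"
      using \<phi>(2) w(2) by (intro AE_I2) (simp add: abs_mult mult_left_le)
  qed (use w(1) \<phi>(1) in simp)
  show "(\<integral>y. \<phi> y \<partial>density M (\<lambda>x. ennreal (w x))) = (\<integral>x. w x * \<phi> x \<partial>M)"
    using integral_density[OF \<phi>(1) w(1)] w(2) by simp
qed

lemma (in sigma_finite_measure) real_density_exists:
  assumes "finite_measure N" "absolutely_continuous M N" "sets N = sets M"
  obtains D where "D \<in> borel_measurable M" "\<And>x. 0 \<le> D x" "N = density M (\<lambda>x. ennreal (D x))"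
proof -
  obtain D where D: "D \<in> borel_measurable M" "AE x in M. RN_deriv M N x = ennreal (D x)" "\<And>x. 0 \<le> D x"
    using real_RN_deriv[OF assms] by blast
  have "N = density M (RN_deriv M N)"
    using density_RN_deriv[OF assms(2,3)] by simp
  also have "\<dots> = density M (\<lambda>x. ennreal (D x))"
    using D by (intro density_cong) auto
  finally show thesis using that D by blast
qed

lemma emeasure_bind_bernoulli:
  assumes "0 \<le> r" "r \<le> 1" "\<And>y. W y \<in> space (subprob_algebra N)" "A \<in> sets N"
  shows "emeasure (measure_pmf (map_pmf h (bernoulli_pmf r)) \<bind> W) A
    = ennreal r * emeasure (W (h True)) A + ennreal (1 - r) * emeasure (W (h False)) A"
proof -
  have "W \<in> measurable (measure_pmf (map_pmf h (bernoulli_pmf r))) (subprob_algebra N)"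
    using assms(3) by simp
  then have "emeasure (measure_pmf (map_pmf h (bernoulli_pmf r)) \<bind> W) A
      = (\<integral>\<^sup>+y. emeasure (W y) A \<partial>measure_pmf (map_pmf h (bernoulli_pmf r)))"
    using assms(4) by (intro emeasure_bind) simp_all
  also have "\<dots> = ennreal r * emeasure (W (h True)) A + ennreal (1 - r) * emeasure (W (h False)) A"
    using assms(1,2) by (simp add: mult.commute)
  finally show ?thesis .
qed

lemma bind_bernoulli_density:
  assumes r: "0 \<le> r" "r \<le> 1" and W: "\<And>y. W y \<in> space (subprob_algebra M)"
    and u: "u \<in> borel_measurable M" "\<And>x. 0 \<le> u x" and v: "v \<in> borel_measurable M" "\<And>x. 0 \<le> v x"
    and W_True: "W (h True) = density M (\<lambda>x. ennreal (u x))"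
    and W_False: "W (h False) = density M (\<lambda>x. ennreal (v x))"
  shows "measure_pmf (map_pmf h (bernoulli_pmf r)) \<bind> W = density M (\<lambda>x. ennreal (r * u x + (1 - r) * v x))"
    (is "?B = ?D")
proof (rule measure_eqI)
  show sets: "sets ?B = sets ?D"
    using W by (subst sets_bind) (auto simp: space_subprob_algebra)
  fix A assume "A \<in> sets ?B"
  then have A: "A \<in> sets M" using sets by simp
  have "emeasure ?B A = ennreal r * (\<integral>\<^sup>+x. ennreal (u x) * indicator A x \<partial>M)
      + ennreal (1 - r) * (\<integral>\<^sup>+x. ennreal (v x) * indicator A x \<partial>M)"
    using emeasure_bind_bernoulli[where W=W and h=h, OF r W A] u(1) v(1) A
    by (simp add: W_True W_False emeasure_density)
  also have "\<dots> = (\<integral>\<^sup>+x. ennreal (r * u x) * indicator A x \<partial>M)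
      + (\<integral>\<^sup>+x. ennreal ((1 - r) * v x) * indicator A x \<partial>M)"
    using u v r A by (simp add: nn_integral_cmult[symmetric] ennreal_mult mult.assoc)
  also have "\<dots> = (\<integral>\<^sup>+x. ennreal (r * u x + (1 - r) * v x) * indicator A x \<partial>M)"
    using u v r A
    by (subst nn_integral_add[symmetric])
      (auto intro!: nn_integral_cong simp: distrib_right ennreal_plus[symmetric]
        split: split_indicator simp del: ennreal_plus)
  also have "\<dots> = emeasure ?D A"
    using u v A by (simp add: emeasure_density)
  finally show "emeasure ?B A = emeasure ?D A" .
qed

locale channel_density =
  fixes C :: "'y channel" and \<mu> :: "'y measure" and f g :: "'y \<Rightarrow> real"
  assumes channel: "is_channel C"
    and f_measurable [measurable]: "f \<in> borel_measurable \<mu>"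
    and g_measurable [measurable]: "g \<in> borel_measurable \<mu>"
    and f_nonneg: "\<And>x. 0 \<le> f x" and g_nonneg: "\<And>x. 0 \<le> g x"
    and fst_eq: "fst C = density \<mu> (\<lambda>x. ennreal (f x))"
    and snd_eq: "snd C = density \<mu> (\<lambda>x. ennreal (g x))"
begin

lemma f_integrable: "integrable \<mu> f" "(\<integral>x. f x \<partial>\<mu>) = 1"
  and g_integrable: "integrable \<mu> g" "(\<integral>x. g x \<partial>\<mu>) = 1"
  using channel prob_space_density_iff[OF f_measurable f_nonneg] prob_space_density_iff[OF g_measurable g_nonneg]
  unfolding is_channel_def fst_eq snd_eq by auto

lemma is_test_fst_iff: "is_test (fst C) \<phi> \<longleftrightarrow> is_test \<mu> \<phi>"
  by (rule is_test_cong_sets) (simp add: fst_eq)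

lemma weighted_errors_eq_integral:
  assumes "is_test \<mu> \<phi>"
  shows "1 - (\<integral>y. \<phi> y \<partial>snd C) + s * (\<integral>y. \<phi> y \<partial>fst C) = (\<integral>x. (1 - \<phi> x) * g x + \<phi> x * (s * f x) \<partial>\<mu>)"
proof -
  note f_test = integral_density_test[OF f_measurable f_nonneg f_integrable(1) assms]
  note g_test = integral_density_test[OF g_measurable g_nonneg g_integrable(1) assms]
  have "(\<integral>x. (1 - \<phi> x) * g x + \<phi> x * (s * f x) \<partial>\<mu>)
      = (\<integral>x. g x - g x * \<phi> x + s * (f x * \<phi> x) \<partial>\<mu>)"
    by (simp add: algebra_simps)
  also have "\<dots> = 1 - (\<integral>x. g x * \<phi> x \<partial>\<mu>) + s * (\<integral>x. f x * \<phi> x \<partial>\<mu>)"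
    using f_test(1) g_test(1) g_integrable by simp
  finally show ?thesis
    unfolding fst_eq snd_eq f_test(2) g_test(2) by simp
qed

lemma integrable_min: "0 \<le> s \<Longrightarrow> integrable \<mu> (\<lambda>x. min (g x) (s * f x))"
  by (rule Bochner_Integration.integrable_bound[OF g_integrable(1)]) (auto simp: f_nonneg g_nonneg)

text \<open>Neyman--Pearson: over all tests, the least value of \<open>\<beta> + s \<alpha>\<close> is \<open>\<integral> min g (s f)\<close>,
  attained by the likelihood-ratio test \<open>{s f < g}\<close>.\<close>
lemma tradeoff_ch_above_line_iff:
  assumes "0 \<le> s"
  shows "(\<forall>x\<in>{0..1}. c - s * x \<le> tradeoff_ch C x) \<longleftrightarrow> c \<le> (\<integral>x. min (g x) (s * f x) \<partial>\<mu>)"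
proof -
  have objective_ge: "(\<integral>x. min (g x) (s * f x) \<partial>\<mu>) \<le> 1 - (\<integral>y. \<phi> y \<partial>snd C) + s * (\<integral>y. \<phi> y \<partial>fst C)"
    if \<phi>: "is_test \<mu> \<phi>" for \<phi>
    unfolding weighted_errors_eq_integral[OF \<phi>]
  proof (rule integral_mono)
    show "integrable \<mu> (\<lambda>x. (1 - \<phi> x) * g x + \<phi> x * (s * f x))"
      using integral_density_test(1)[OF f_measurable f_nonneg f_integrable(1) \<phi>]
        integral_density_test(1)[OF g_measurable g_nonneg g_integrable(1) \<phi>] g_integrable(1)
      by (simp add: algebra_simps)
    fix x assume "x \<in> space \<mu>"
    then have "0 \<le> \<phi> x" "\<phi> x \<le> 1" using \<phi> unfolding is_test_def by auto
    then have "(1 - \<phi> x) * min (g x) (s * f x) \<le> (1 - \<phi> x) * g x"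
      "\<phi> x * min (g x) (s * f x) \<le> \<phi> x * (s * f x)"
      by (simp_all add: mult_left_mono)
    then show "min (g x) (s * f x) \<le> (1 - \<phi> x) * g x + \<phi> x * (s * f x)"
      by (simp add: algebra_simps)
  qed (rule integrable_min[OF assms])
  define G where "G = {x \<in> space \<mu>. s * f x < g x}"
  have G: "is_test \<mu> (indicator G)"
    unfolding G_def by (intro is_test_indicator) measurable
  have objective_G: "1 - (\<integral>y. indicator G y \<partial>snd C) + s * (\<integral>y. indicator G y \<partial>fst C)
      = (\<integral>x. min (g x) (s * f x) \<partial>\<mu>)"
    unfolding weighted_errors_eq_integral[OF G] by (intro Bochner_Integration.integral_cong) (auto simp: G_def indicator_def)
  show ?thesis
    unfolding tradeoff_ch_above_line_iff_tests[OF channel assms] is_test_fst_iff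
  proof safe
    assume "\<forall>\<phi>. is_test \<mu> \<phi> \<longrightarrow> c \<le> 1 - (\<integral>y. \<phi> y \<partial>snd C) + s * (\<integral>y. \<phi> y \<partial>fst C)"
    then have "c \<le> 1 - (\<integral>y. indicator G y \<partial>snd C) + s * (\<integral>y. indicator G y \<partial>fst C)"
      using G by blast
    then show "c \<le> (\<integral>x. min (g x) (s * f x) \<partial>\<mu>)" unfolding objective_G .
  next
    fix \<phi> assume "c \<le> (\<integral>x. min (g x) (s * f x) \<partial>\<mu>)" "is_test \<mu> \<phi>"
    with objective_ge show "c \<le> 1 - (\<integral>y. \<phi> y \<partial>snd C) + s * (\<integral>y. \<phi> y \<partial>fst C)"
      by (blast intro: order_trans)
  qed
qed

lemma tradeoff_ch_0_le: "tradeoff_ch C 0 \<le> (\<integral>x. (if f x = 0 then 0 else g x) \<partial>\<mu>)"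
proof -
  define Z where "Z = {x \<in> space \<mu>. f x = 0}"
  have Z: "is_test \<mu> (indicator Z)"
    unfolding Z_def by (intro is_test_indicator) measurable
  have "(\<integral>y. indicator Z y \<partial>fst C) = (\<integral>x. f x * indicator Z x \<partial>\<mu>)"
    unfolding fst_eq by (rule integral_density_test(2)[OF f_measurable f_nonneg f_integrable(1) Z])
  also have "\<dots> = (\<integral>x. 0 \<partial>\<mu>)"
    by (intro Bochner_Integration.integral_cong) (auto simp: Z_def indicator_def)
  finally have "(\<integral>y. indicator Z y \<partial>fst C) \<le> (0 :: real)" by simp
  with Z have "tradeoff_ch C 0 \<le> 1 - (\<integral>y. indicator Z y \<partial>snd C) + 0 * (\<integral>y. indicator Z y \<partial>fst C)"
    unfolding mult_zero_left add_0_right by (intro tradeoff_ch_le[OF channel]) (simp_all add: is_test_fst_iff)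
  also have "\<dots> = (\<integral>x. (if f x = 0 then 0 else g x) \<partial>\<mu>)"
    unfolding weighted_errors_eq_integral[OF Z] by (intro Bochner_Integration.integral_cong) (auto simp: Z_def indicator_def)
  finally show ?thesis .
qed

lemma integral_min_tendsto:
  "(\<lambda>n. \<integral>x. min (g x) (real n * f x) \<partial>\<mu>) \<longlonglongrightarrow> (\<integral>x. (if f x = 0 then 0 else g x) \<partial>\<mu>)"
proof (rule integral_dominated_convergence[where w=g])
  show "AE x in \<mu>. (\<lambda>n. min (g x) (real n * f x)) \<longlonglongrightarrow> (if f x = 0 then 0 else g x)"
  proof (intro AE_I2)
    fix x
    show "(\<lambda>n. min (g x) (real n * f x)) \<longlonglongrightarrow> (if f x = 0 then 0 else g x)"
    proof (cases "f x = 0")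
      case False
      then have "0 < f x" using f_nonneg[of x] by simp
      obtain N :: nat where "g x / f x < real N" using reals_Archimedean2 by blast
      then have "g x / f x < real n" if "N \<le> n" for n
        using that by (meson less_le_trans of_nat_le_iff)
      then have "min (g x) (real n * f x) = g x" if "N \<le> n" for n
        using that \<open>0 < f x\<close> by (simp add: divide_less_eq)
      then have "eventually (\<lambda>n. min (g x) (real n * f x) = g x) sequentially"
        by (rule eventually_sequentiallyI)
      with False show ?thesis by (simp add: tendsto_eventually)
    qed (simp add: g_nonneg)
  qed
qed (auto simp: g_integrable f_nonneg g_nonneg)

lemma tradeoff_ch_line_near_0:
  assumes "0 < e"
  obtains s where "0 < s" "\<And>x. x \<in> {0..1} \<Longrightarrow> tradeoff_ch C 0 - e - s * x \<le> tradeoff_ch C x"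
proof -
  let ?L = "\<integral>x. (if f x = 0 then 0 else g x) \<partial>\<mu>"
  have "eventually (\<lambda>n. ?L - e < (\<integral>x. min (g x) (real n * f x) \<partial>\<mu>)) sequentially"
    using order_tendstoD(1)[OF integral_min_tendsto] assms by simp
  then obtain N where N: "?L - e < (\<integral>x. min (g x) (real (Suc N) * f x) \<partial>\<mu>)"
    unfolding eventually_sequentially by (meson le_SucI order_refl)
  with tradeoff_ch_0_le have "tradeoff_ch C 0 - e \<le> (\<integral>x. min (g x) (real (Suc N) * f x) \<partial>\<mu>)"
    by linarith
  then have "\<forall>x\<in>{0..1}. tradeoff_ch C 0 - e - real (Suc N) * x \<le> tradeoff_ch C x"
    by (subst tradeoff_ch_above_line_iff) simp_all
  with that[of "real (Suc N)"] show thesis by simp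
qed

end

lemma channel_density_exists:
  assumes "is_channel C"
  obtains \<mu> f g where "channel_density C \<mu> f g"
proof -
  have C: "prob_space (fst C)" "prob_space (snd C)" "sets (snd C) = sets (fst C)"
    using assms unfolding is_channel_def by auto
  define K where "K b = (if b then fst C else snd C)" for b
  define \<mu> where "\<mu> = measure_pmf (bernoulli_pmf (1/2)) \<bind> K"
  have K: "K b \<in> space (subprob_algebra (fst C))" for b
    using C by (auto simp: K_def space_subprob_algebra prob_space_imp_subprob_space)
  have sets_\<mu>: "sets \<mu> = sets (fst C)"
    unfolding \<mu>_def using K by (subst sets_bind) (auto simp: space_subprob_algebra)
  have emeasure_\<mu>: "emeasure \<mu> A = ennreal (1/2) * emeasure (fst C) A + ennreal (1/2) * emeasure (snd C) A"
    if "A \<in> sets (fst C)" for A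
    using emeasure_bind_bernoulli[where h=id and W=K, OF _ _ K that, unfolded pmf.map_id id_apply]
    unfolding \<mu>_def K_def by simp
  have "ennreal (1/2) + ennreal (1/2) = 1"
    by (subst ennreal_plus[symmetric]) simp_all
  then have "emeasure \<mu> (space \<mu>) = 1"
    using emeasure_\<mu>[of "space (fst C)"] sets_eq_imp_space_eq[OF sets_\<mu>] sets_eq_imp_space_eq[OF C(3)]
      prob_space.emeasure_space_1[OF C(1)] prob_space.emeasure_space_1[OF C(2)]
    by simp
  then interpret \<mu>: prob_space \<mu> by (rule prob_spaceI)
  have "absolutely_continuous \<mu> (fst C) \<and> absolutely_continuous \<mu> (snd C)"
    unfolding absolutely_continuous_def
  proof safe
    fix A assume "A \<in> null_sets \<mu>"
    then have A: "A \<in> sets (fst C)" "emeasure \<mu> A = 0" using sets_\<mu> by auto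
    then have "emeasure (fst C) A = 0" "emeasure (snd C) A = 0"
      using emeasure_\<mu>[OF A(1)] by (simp_all add: ennreal_eq_0_iff)
    then show "A \<in> null_sets (fst C)" "A \<in> null_sets (snd C)" using A(1) C(3) by auto
  qed
  moreover have "finite_measure (fst C)" "finite_measure (snd C)"
    using C by (simp_all add: prob_space_def)
  ultimately obtain f g where
      f: "f \<in> borel_measurable \<mu>" "\<And>x. 0 \<le> f x" "fst C = density \<mu> (\<lambda>x. ennreal (f x))" and
      g: "g \<in> borel_measurable \<mu>" "\<And>x. 0 \<le> g x" "snd C = density \<mu> (\<lambda>x. ennreal (g x))"
    using \<mu>.real_density_exists[of "fst C"] \<mu>.real_density_exists[of "snd C"] sets_\<mu> C(3) by metis
  have "channel_density C \<mu> f g"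
    using assms f g by unfold_locales
  with that show thesis .
qed

lemma tradeoff_ch_line_near_0:
  assumes "is_channel C" "0 < e"
  obtains s where "0 < s" "\<And>x. x \<in> {0..1} \<Longrightarrow> tradeoff_ch C 0 - e - s * x \<le> tradeoff_ch C x"
proof -
  obtain \<mu> f g where "channel_density C \<mu> f g"
    using channel_density_exists[OF assms(1)] .
  then interpret channel_density C \<mu> f g .
  from tradeoff_ch_line_near_0[OF assms(2)] that show thesis by blast
qed

section \<open>Line channels\<close>

text \<open>For \<open>0 < c \<le> s\<close> the trade-off function of this channel is \<open>max (c - s \<alpha>) 0\<close>.\<close>
definition line_channel :: "real \<Rightarrow> real \<Rightarrow> real channel" where
  "line_channel c s =
    (measure_pmf (map_pmf (\<lambda>b. if b then 1 else 2) (bernoulli_pmf (c / s))),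
     measure_pmf (map_pmf (\<lambda>b. if b then 0 else 1) (bernoulli_pmf (1 - c))))"

lemma is_channel_line_channel: "is_channel (line_channel c s)"
  unfolding is_channel_def line_channel_def by (simp add: measure_pmf.prob_space_axioms)

lemma tradeoff_line_channel_ge:
  assumes "0 < c" "c < 1" "c < s" "0 \<le> \<alpha>"
  shows "c - s * \<alpha> \<le> tradeoff_ch (line_channel c s) \<alpha>"
proof (rule tradeoff_ch_ge[OF \<open>0 \<le> \<alpha>\<close>])
  fix \<phi> assume \<phi>: "is_test (fst (line_channel c s)) \<phi>"
    and "(\<integral>y. \<phi> y \<partial>fst (line_channel c s)) \<le> \<alpha>"
  have "0 \<le> \<phi> y" "\<phi> y \<le> 1" for y
    using \<phi> unfolding is_test_def line_channel_def by auto
  moreover have "c / s * \<phi> 1 + (1 - c / s) * \<phi> 2 \<le> \<alpha>"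
    using \<open>(\<integral>y. \<phi> y \<partial>fst (line_channel c s)) \<le> \<alpha>\<close> assms
    unfolding line_channel_def by (simp add: algebra_simps)
  then have "c * \<phi> 1 + (s - c) * \<phi> 2 \<le> s * \<alpha>"
    using assms by (simp add: field_simps)
  moreover have "(\<integral>y. \<phi> y \<partial>snd (line_channel c s)) = (1 - c) * \<phi> 0 + c * \<phi> 1"
    using assms unfolding line_channel_def by (simp add: algebra_simps)
  moreover have "0 \<le> (s - c) * \<phi> 2" "(1 - c) * \<phi> 0 \<le> 1 - c"
    using assms \<open>0 \<le> \<phi> 2\<close> \<open>\<phi> 0 \<le> 1\<close> by (simp_all add: mult_left_le)
  ultimately show "c - s * \<alpha> \<le> 1 - (\<integral>y. \<phi> y \<partial>snd (line_channel c s))"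
    by linarith
qed

lemma refines_line_channel_mixture:
  assumes c: "0 \<le> c" "c \<le> 1" "c \<le> s" "0 < s"
    and "prob_density M u" "prob_density M v" "prob_density M w"
  shows "refines (line_channel c s)
    (density M (\<lambda>x. ennreal (c / s * v x + (1 - c / s) * w x)),
     density M (\<lambda>x. ennreal ((1 - c) * u x + c * v x)))"
proof -
  define W where "W y = (if y = 0 then density M (\<lambda>x. ennreal (u x))
    else if y = 1 then density M (\<lambda>x. ennreal (v x)) else density M (\<lambda>x. ennreal (w x)))" for y :: real
  have u: "u \<in> borel_measurable M" "\<And>x. 0 \<le> u x"
    and v: "v \<in> borel_measurable M" "\<And>x. 0 \<le> v x"
    and w: "w \<in> borel_measurable M" "\<And>x. 0 \<le> w x"
    using assms(5-7) unfolding prob_density_def by auto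
  have W_prob: "prob_space (W y)" for y
    using assms(5-7) by (simp add: W_def prob_density_prob_space)
  then have W: "W y \<in> space (subprob_algebra M)" for y
    by (simp add: W_def space_subprob_algebra prob_space_imp_subprob_space)
  have "fst (line_channel c s) \<bind> W = density M (\<lambda>x. ennreal (c / s * v x + (1 - c / s) * w x))"
    unfolding line_channel_def fst_conv
    using bind_bernoulli_density[where r="c / s" and W=W and h="\<lambda>b. if b then 1 else 2", OF _ _ W v(1,2) w(1,2)] c
    by (simp add: W_def)
  moreover have "snd (line_channel c s) \<bind> W = density M (\<lambda>x. ennreal ((1 - c) * u x + c * v x))"
    unfolding line_channel_def snd_conv
    using bind_bernoulli_density[where r="1 - c" and W=W and h="\<lambda>b. if b then 0 else 1", OF _ _ W u(1,2) v(1,2)] c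
    by (simp add: W_def)
  moreover have "W \<in> measurable (fst (line_channel c s)) (subprob_algebra M)"
    using W unfolding line_channel_def by simp
  moreover have "subprob_algebra (density M (\<lambda>x. ennreal (c / s * v x + (1 - c / s) * w x))) = subprob_algebra M"
    by (rule subprob_algebra_cong) simp
  ultimately show ?thesis
    unfolding refines_def using W_prob by (intro exI[of _ W]) simp
qed

context channel_density
begin

text \<open>The witnesses are the normalised overlap \<open>v\<close> of \<open>g\<close> and \<open>s f\<close> and the normalised
  remainders \<open>u\<close> of \<open>g\<close> and \<open>w\<close> of \<open>f\<close>.\<close>
lemma overlap_decomposition:
  assumes c: "0 < c" "c < 1" "c < s" and "c \<le> (\<integral>x. min (g x) (s * f x) \<partial>\<mu>)"
  obtains u v w where "prob_density \<mu> u" "prob_density \<mu> v" "prob_density \<mu> w"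
    "f = (\<lambda>x. c / s * v x + (1 - c / s) * w x)" "g = (\<lambda>x. (1 - c) * u x + c * v x)"
proof -
  define m where "m x = min (g x) (s * f x)" for x
  define t where "t = c / (\<integral>x. m x \<partial>\<mu>)"
  have m: "0 \<le> m x" "m x \<le> g x" "m x \<le> s * f x" for x
    using f_nonneg[of x] g_nonneg[of x] c by (auto simp: m_def)
  have m_integrable: "integrable \<mu> m"
    unfolding m_def using c by (intro integrable_min) simp
  have m_pos: "0 < (\<integral>x. m x \<partial>\<mu>)"
    using assms by (simp add: m_def)
  have t: "0 < t" "t \<le> 1"
    using assms m_pos by (auto simp: t_def m_def)
  define u where "u x = (g x - t * m x) / (1 - c)" for x
  define v where "v x = m x / (\<integral>x. m x \<partial>\<mu>)" for x
  define w where "w x = (f x - t * m x / s) / (1 - c / s)" for x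
  have "0 \<le> u x \<and> 0 \<le> v x \<and> 0 \<le> w x" for x
  proof -
    have "t * m x \<le> m x"
      using m(1)[of x] t by (simp add: mult_left_le_one_le)
    then have "t * m x \<le> g x" "t * m x \<le> s * f x"
      using m(2,3)[of x] by linarith+
    then show ?thesis
      using m(1)[of x] m_pos t c by (auto simp: u_def v_def w_def field_simps)
  qed
  moreover have "u \<in> borel_measurable \<mu>" "v \<in> borel_measurable \<mu>" "w \<in> borel_measurable \<mu>"
    unfolding u_def v_def w_def m_def by measurable
  moreover have "integrable \<mu> u" "integrable \<mu> v" "integrable \<mu> w"
    unfolding u_def[abs_def] v_def[abs_def] w_def[abs_def]
    using m_integrable f_integrable(1) g_integrable(1) by simp_all
  moreover have "(\<integral>x. u x \<partial>\<mu>) = 1" "(\<integral>x. v x \<partial>\<mu>) = 1" "(\<integral>x. w x \<partial>\<mu>) = 1"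
    unfolding u_def v_def w_def t_def
    using m_integrable m_pos f_integrable g_integrable c by (simp_all add: field_simps)
  moreover have "f = (\<lambda>x. c / s * v x + (1 - c / s) * w x)" "g = (\<lambda>x. (1 - c) * u x + c * v x)"
    unfolding fun_eq_iff u_def v_def w_def t_def using m_pos c by (simp_all add: field_simps)
  ultimately show thesis
    using that[of u v w] unfolding prob_density_def by blast
qed

lemma refines_line_channel:
  assumes c: "0 < c" "c < 1" "c < s" and "c \<le> (\<integral>x. min (g x) (s * f x) \<partial>\<mu>)"
  shows "refines (line_channel c s) C"
proof -
  obtain u v w where uvw: "prob_density \<mu> u" "prob_density \<mu> v" "prob_density \<mu> w"
    and "f = (\<lambda>x. c / s * v x + (1 - c / s) * w x)" "g = (\<lambda>x. (1 - c) * u x + c * v x)"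
    using overlap_decomposition[OF assms] .
  then have "C = (density \<mu> (\<lambda>x. ennreal (c / s * v x + (1 - c / s) * w x)),
      density \<mu> (\<lambda>x. ennreal ((1 - c) * u x + c * v x)))"
    using fst_eq snd_eq by (simp add: prod_eq_iff)
  with refines_line_channel_mixture[OF _ _ _ _ uvw] c show ?thesis
    by simp
qed

end

lemma refines_line_channel:
  assumes "is_channel C" "0 < c" "c < 1" "c < s" "\<And>x. x \<in> {0..1} \<Longrightarrow> c - s * x \<le> tradeoff_ch C x"
  shows "refines (line_channel c s) C"
proof -
  obtain \<mu> f g where "channel_density C \<mu> f g"
    using channel_density_exists[OF assms(1)] .
  then interpret channel_density C \<mu> f g .
  show ?thesis
    using assms by (intro refines_line_channel) (auto simp: tradeoff_ch_above_line_iff[symmetric])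
qed

section \<open>The trade-off function of the meet\<close>

lemma convex_on_supporting_line:
  fixes h :: "real \<Rightarrow> real"
  assumes "convex_on {a..b} h" "a < x" "x < b"
  obtains \<sigma> where "\<And>y. y \<in> {a..b} \<Longrightarrow> h x + \<sigma> * (y - x) \<le> h y"
proof -
  have slopes: "(h u - h x) / (u - x) \<le> (h x - h v) / (x - v)" if "a \<le> u" "u < x" "x < v" "v \<le> b" for u v
    using convex_on_slope_le[OF assms(1), of u v x] that by auto
  define \<sigma> where "\<sigma> = Sup {(h u - h x) / (u - x) | u. a \<le> u \<and> u < x}"
  have "bdd_above {(h u - h x) / (u - x) | u. a \<le> u \<and> u < x}"
    using slopes[of _ b] assms(3) by (auto intro!: bdd_aboveI[of _ "(h x - h b) / (x - b)"])
  then have left: "(h u - h x) / (u - x) \<le> \<sigma>" if "a \<le> u" "u < x" for u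
    unfolding \<sigma>_def using that by (auto intro!: cSup_upper)
  have right: "\<sigma> \<le> (h x - h v) / (x - v)" if "x < v" "v \<le> b" for v
    unfolding \<sigma>_def using assms(2) slopes that by (auto intro!: cSup_least)
  have "h x + \<sigma> * (y - x) \<le> h y" if "y \<in> {a..b}" for y
  proof (cases y x rule: linorder_cases)
    case less
    with left[of y] that show ?thesis by (simp add: divide_le_eq mult.commute)
  next
    case greater
    with right[of y] that have "h x - h y \<le> \<sigma> * (x - y)" by (simp add: le_divide_eq mult.commute)
    then show ?thesis by (simp add: algebra_simps)
  qed simp
  with that show thesis by blast
qed

lemma in_F_line_below:
  assumes h: "in_F h" and \<alpha>: "0 < \<alpha>" "\<alpha> < 1" and e: "0 < e" "e < h \<alpha>"
  obtains c s where "0 < c" "c < 1" "c < s" "c - s * \<alpha> = h \<alpha> - e"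
    "\<And>x. x \<in> {0..1} \<Longrightarrow> c - s * x \<le> h x - e"
proof -
  have "convex_on {0..1} h" and h_le: "\<And>x. x \<in> {0..1} \<Longrightarrow> h x \<le> 1 - x"
    using h unfolding in_F_def by auto
  then obtain \<sigma> where \<sigma>: "\<And>x. x \<in> {0..1} \<Longrightarrow> h \<alpha> + \<sigma> * (x - \<alpha>) \<le> h x"
    using convex_on_supporting_line \<alpha> by blast
  define s where "s = - \<sigma>"
  define c where "c = h \<alpha> + s * \<alpha> - e"
  have "h \<alpha> \<le> s * (1 - \<alpha>)"
    using \<sigma>[of 1] h_le[of 1] by (simp add: s_def algebra_simps)
  with e have "0 < s * (1 - \<alpha>)"
    by linarith
  with \<alpha> have "0 < s"
    by (simp add: zero_less_mult_iff)
  have "h \<alpha> + s * \<alpha> \<le> 1"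
    using \<sigma>[of 0] h_le[of 0] by (simp add: s_def)
  show thesis
  proof (rule that[of c s])
    show "0 < c" unfolding c_def using mult_pos_pos[OF \<open>0 < s\<close> \<alpha>(1)] e by linarith
    show "c < 1" "c < s" using \<open>h \<alpha> + s * \<alpha> \<le> 1\<close> \<open>h \<alpha> \<le> s * (1 - \<alpha>)\<close> e
      by (simp_all add: c_def algebra_simps)
    show "c - s * \<alpha> = h \<alpha> - e" by (simp add: c_def)
    show "c - s * x \<le> h x - e" if "x \<in> {0..1}" for x
      using \<sigma>[OF that] by (simp add: c_def s_def algebra_simps)
  qed
qed

lemma tradeoff_ch_glb_ge_line:
  assumes "is_channel_glb D C C'" "is_channel C" "is_channel C'"
    and c: "0 < c" "c < 1" "c < s" and "0 \<le> \<alpha>"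
    and "\<And>x. x \<in> {0..1} \<Longrightarrow> c - s * x \<le> tradeoff_ch C x"
    and "\<And>x. x \<in> {0..1} \<Longrightarrow> c - s * x \<le> tradeoff_ch C' x"
  shows "c - s * \<alpha> \<le> tradeoff_ch D \<alpha>"
proof -
  have "refines (line_channel c s) C" "refines (line_channel c s) C'"
    using assms by (auto intro: refines_line_channel)
  then have "is_channel D" "refines (line_channel c s) D"
    using assms(1) is_channel_line_channel unfolding is_channel_glb_def by blast+
  have "c - s * \<alpha> \<le> tradeoff_ch (line_channel c s) \<alpha>"
    using tradeoff_line_channel_ge[OF c \<open>0 \<le> \<alpha>\<close>] .
  also have "\<dots> \<le> tradeoff_ch D \<alpha>"
    using tradeoff_ch_mono_refines[OF is_channel_line_channel \<open>is_channel D\<close> \<open>refines _ D\<close> \<open>0 \<le> \<alpha>\<close>] .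
  finally show ?thesis .
qed

lemma in_F_le_tradeoff_ch_glb:
  assumes D: "is_channel_glb D C C'" and C: "is_channel C" and C': "is_channel C'"
    and h: "in_F h" "\<And>x. x \<in> {0..1} \<Longrightarrow> h x \<le> tradeoff_ch C x"
      "\<And>x. x \<in> {0..1} \<Longrightarrow> h x \<le> tradeoff_ch C' x"
    and \<alpha>: "\<alpha> \<in> {0..1}"
  shows "h \<alpha> \<le> tradeoff_ch D \<alpha>"
proof (rule field_le_epsilon)
  fix e :: real assume "0 < e"
  have "is_channel D" using D unfolding is_channel_glb_def by blast
  have h_bounds: "0 \<le> h x" "h x \<le> 1 - x" if "x \<in> {0..1}" for x
    using h(1) that unfolding in_F_def by auto
  consider "h \<alpha> \<le> e" | "\<alpha> = 0" "e < h \<alpha>" | "0 < \<alpha>" "\<alpha> < 1" "e < h \<alpha>"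
    using \<alpha> h_bounds[of 1] \<open>0 < e\<close> by fastforce
  then show "h \<alpha> \<le> tradeoff_ch D \<alpha> + e"
  proof cases
    case 1
    then show ?thesis using tradeoff_ch_nonneg[OF \<open>is_channel D\<close>] \<alpha> by fastforce
  next
    case 2
    obtain s\<^sub>1 where s\<^sub>1: "\<And>x. x \<in> {0..1} \<Longrightarrow> tradeoff_ch C 0 - e - s\<^sub>1 * x \<le> tradeoff_ch C x"
      using tradeoff_ch_line_near_0[OF C \<open>0 < e\<close>] by blast
    obtain s\<^sub>2 where s\<^sub>2: "\<And>x. x \<in> {0..1} \<Longrightarrow> tradeoff_ch C' 0 - e - s\<^sub>2 * x \<le> tradeoff_ch C' x"
      using tradeoff_ch_line_near_0[OF C' \<open>0 < e\<close>] by blast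
    define s where "s = max 1 (max s\<^sub>1 s\<^sub>2)"
    have "h 0 - e - s * x \<le> tradeoff_ch C x \<and> h 0 - e - s * x \<le> tradeoff_ch C' x" if "x \<in> {0..1}" for x
    proof -
      have "s\<^sub>1 * x \<le> s * x" "s\<^sub>2 * x \<le> s * x"
        using that by (simp_all add: s_def mult_right_mono)
      then show ?thesis
        using s\<^sub>1[OF that] s\<^sub>2[OF that] h(2,3)[of 0] by fastforce
    qed
    moreover have "0 < h 0 - e" "h 0 - e < 1" "h 0 - e < s"
      using 2 \<open>0 < e\<close> h_bounds[of 0] by (auto simp: s_def)
    ultimately have "h 0 - e - s * 0 \<le> tradeoff_ch D 0"
      by (intro tradeoff_ch_glb_ge_line[OF D C C']) auto
    with 2 show ?thesis by simp
  next
    case 3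
    then obtain c s where "0 < c" "c < 1" "c < s" "c - s * \<alpha> = h \<alpha> - e"
        and line: "\<And>x. x \<in> {0..1} \<Longrightarrow> c - s * x \<le> h x - e"
      using in_F_line_below[OF h(1) _ _ \<open>0 < e\<close>] by blast
    have "c - s * \<alpha> \<le> tradeoff_ch D \<alpha>"
    proof (rule tradeoff_ch_glb_ge_line[OF D C C' \<open>0 < c\<close> \<open>c < 1\<close> \<open>c < s\<close>])
      fix x :: real assume "x \<in> {0..1}"
      with line[of x] h(2,3)[of x] \<open>0 < e\<close>
      show "c - s * x \<le> tradeoff_ch C x" "c - s * x \<le> tradeoff_ch C' x" by linarith+
    qed (use 3 in simp)
    with \<open>c - s * \<alpha> = h \<alpha> - e\<close> show ?thesis by simp
  qed
qed

theorem mainTheorem5: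
  fixes C :: "'a channel" and C' :: "'b channel" and D :: "'d channel"
  assumes "is_channel C" and "is_channel C'"
    and "is_channel_glb D C C'"
  shows "\<forall>\<alpha>\<in>{0..1}. tradeoff_ch D \<alpha> = F_meet (tradeoff_ch C) (tradeoff_ch C') \<alpha>"
proof
  fix \<alpha> :: real assume \<alpha>: "\<alpha> \<in> {0..1}"
  have "is_channel D" "refines D C" "refines D C'"
    using assms(3) unfolding is_channel_glb_def by blast+
  let ?S = "{h \<alpha> | h. in_F h \<and> (\<forall>x\<in>{0..1}. h x \<le> tradeoff_ch C x \<and> h x \<le> tradeoff_ch C' x)}"
  have "\<forall>x\<in>{0..1}. tradeoff_ch D x \<le> tradeoff_ch C x \<and> tradeoff_ch D x \<le> tradeoff_ch C' x"
    using tradeoff_ch_mono_refines[OF \<open>is_channel D\<close> assms(1) \<open>refines D C\<close>]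
      tradeoff_ch_mono_refines[OF \<open>is_channel D\<close> assms(2) \<open>refines D C'\<close>] by simp
  then have "tradeoff_ch D \<alpha> \<in> ?S"
    using tradeoff_ch_in_F[OF \<open>is_channel D\<close>] by blast
  moreover have "x \<le> tradeoff_ch D \<alpha>" if "x \<in> ?S" for x
    using that in_F_le_tradeoff_ch_glb[OF assms(3,1,2) _ _ _ \<alpha>] by blast
  ultimately have "Sup ?S = tradeoff_ch D \<alpha>"
    by (intro cSup_eq_maximum)
  then show "tradeoff_ch D \<alpha> = F_meet (tradeoff_ch C) (tradeoff_ch C') \<alpha>"
    unfolding F_meet_def by simp
qed

end
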